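(* Let $p>3$ be prime, $0\le m\le p-1$ and $1\le \ell\le p-1$. Then $$\mathcal{K}^{(C)}_{p,m}(\zeta_p^{\ell},z)=(1-\zeta_p^{\ell})\,\Big(\frac{\eta(p^2z)}{\eta(z)}\,\mathcal{F}_1(\ell;z)\Big)\Big|U_{p,m},$$ where $U_{p,m}$ is taken in weight $1$.
   Context: $z$ in the upper half-plane, $q=e^{2\pi i z}$, $q^r=e^{2\pi i r z}$, $\zeta_p=e^{2\pi i/p}$, $(a;q)_\infty=\prod_{k\ge0}(1-aq^k)$, $\eta(z)=q^{1/24}\prod_{n\ge1}(1-q^n)$. $E_{0,\ell}(z)=q^{1/12}\prod_{m\ge1}(1-\zeta_p^{\ell}q^{m-1})(1-\zeta_p^{-\ell}q^{m})$ and $\mathcal{F}_1(\ell;z)=\eta(z)^2/E_{0,\ell}(z)$. Crank generating function: $C(x,q)=\frac{(q;q)_\infty}{(xq;q)_\infty(x^{-1}q;q)_\infty}$; write $C(\zeta_p^\ell,q)=\sum_{n\ge0}c_\ell(n)q^n$ and set $c_\ell(n)=0$ for $n<0$ (equivalently $c_\ell(n)=\sum_{k=0}^{p-1}M(k,p,n)\zeta_p^{k\ell}$, where $M(k,p,n)$ is the number of partitions of $n$ with crank $\equiv k\pmod p$, with the usual convention at $n=1$ dictated by the generating function). Let $s_p=\frac{p^2-1}{24}$ and for an integer $m$ define $\mathcal{K}^{(C)}_{p,m}(\zeta_p^{\ell},z)=q^{m/p}\prod_{n\ge1}(1-q^{pn})\sum_{n\in\mathbb{Z}}c_\ell(pn+m-s_p)\,q^n$.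 For a function $F(z)=\sum_n a(n)q^n$ (exponents in $\tfrac1N\mathbb{Z}$ allowed, $a(n)=0$ for non-integral $n$ below), the operator $U_{p,m}$ in weight $k$ is $F|U_{p,m}=\frac1p\sum_{r=0}^{p-1}e^{-2\pi i rm/p}F\big(\tfrac{z+r}{p}\big)$; on integral-exponent expansions it gives $F|U_{p,m}=q^{m/p}\sum_n a(pn+m)q^n$. *)

theory Defs
  imports "HOL-Analysis.Analysis"
begin

definition qpow :: "real \<Rightarrow> complex \<Rightarrow> complex" where
  "qpow r z = exp (2 * pi * \<i> * of_real r * z)"

definition qq :: "complex \<Rightarrow> complex" where
  "qq z = exp (2 * pi * \<i> * z)"

definition zeta :: "nat \<Rightarrow> complex" where
  "zeta p = exp (2 * pi * \<i> / of_nat p)"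

definition qpoch :: "complex \<Rightarrow> complex \<Rightarrow> complex" where
  "qpoch a q = (\<Prod>k. (1 - a * q ^ k))"

definition eta :: "complex \<Rightarrow> complex" where
  "eta z = qpow (1/24) z * (\<Prod>n. (1 - qq z ^ (n + 1)))"

definition E0 :: "nat \<Rightarrow> nat \<Rightarrow> complex \<Rightarrow> complex" where
  "E0 p l z = qpow (1/12) z *
     (\<Prod>m. (1 - zeta p ^ l * qq z ^ m) * (1 - inverse (zeta p ^ l) * qq z ^ (m + 1)))"

definition F1 :: "nat \<Rightarrow> nat \<Rightarrow> complex \<Rightarrow> complex" where
  "F1 p l z = eta z ^ 2 / E0 p l z"

definition crank_gf :: "complex \<Rightarrow> complex \<Rightarrow> complex" where
  "crank_gf x q = qpoch q q / (qpoch (x * q) q * qpoch (inverse x * q) q)"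

definition crank_coeff :: "nat \<Rightarrow> nat \<Rightarrow> int \<Rightarrow> complex" where
  "crank_coeff p l n =
     (if n < 0 then 0
      else (deriv ^^ nat n) (\<lambda>q. crank_gf (zeta p ^ l) q) 0 / of_nat (fact (nat n)))"

definition s_p :: "nat \<Rightarrow> int" where
  "s_p p = (int p ^ 2 - 1) div 24"

definition KC :: "nat \<Rightarrow> nat \<Rightarrow> nat \<Rightarrow> complex \<Rightarrow> complex" where
  "KC p m l z = qpow (real m / real p) z * (\<Prod>n. (1 - qq z ^ (p * (n + 1)))) *
     infsum (\<lambda>n::int. crank_coeff p l (int p * n + int m - s_p p) * qpow (real_of_int n) z) UNIV"

definition Uop :: "nat \<Rightarrow> nat \<Rightarrow> (complex \<Rightarrow> complex) \<Rightarrow> complex \<Rightarrow> complex" where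
  "Uop p m F z = (1 / of_nat p) *
     (\<Sum>r<p. exp (- 2 * pi * \<i> * of_nat r * of_nat m / of_nat p) * F ((z + of_nat r) / of_nat p))"

end

theory Submission
  imports Defs "HOL-Complex_Analysis.Complex_Analysis"
begin

(* With q = e^{2 pi i w}, the product expansions of eta, E_{0,l} and C give
     (1 - zeta^l) eta(p^2 w) / eta(w) F_1(l;w) = q^s (q^{p^2};q^{p^2}) C(zeta^l, q),
   where s = (p^2 - 1)/24 is an integer because p^2 = 1 (mod 24).  At w = (z + r)/p we have
   q = t zeta_p^r with t = e^{2 pi i z/p}, and q^{p^2} = e^{2 pi i p z} does not depend on r, so the
   right side is (e^{2 pi i p z}; e^{2 pi i p z}) sum_n c_l(n - s) (t zeta_p^r)^n.  Averaging over r
   against zeta_p^(-rm) keeps exactly the terms with n = m (mod p), and writing n = pk + m turns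
   the result into K^(C)_{p,m}. *)

lemma prime_square_mod_24:
  fixes p :: nat
  assumes "prime p" and "p > 3"
  shows "p ^ 2 mod 24 = 1"
proof -
  have "\<not> 2 dvd p" "\<not> 3 dvd p"
    using assms prime_nat_iff[of p] by auto
  then have "p mod 24 = 1 \<or> p mod 24 = 5 \<or> p mod 24 = 7 \<or> p mod 24 = 11 \<or>
      p mod 24 = 13 \<or> p mod 24 = 17 \<or> p mod 24 = 19 \<or> p mod 24 = 23"
    by presburger
  then have "(p mod 24) ^ 2 mod 24 = 1"
    by auto
  then show ?thesis
    by (simp add: power_mod)
qed

lemma s_p_exact:
  fixes p :: nat
  assumes "prime p" and "p > 3"
  obtains s :: nat where "p ^ 2 = 24 * s + 1" and "s_p p = int s"
proof
  show *: "p ^ 2 = 24 * (p ^ 2 div 24) + 1"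
    using prime_square_mod_24[OF assms] by (metis div_mult_mod_eq mult.commute)
  have "int p ^ 2 - 1 = 24 * int (p ^ 2 div 24)"
    using arg_cong[OF *, of int] by simp
  then show "s_p p = int (p ^ 2 div 24)"
    unfolding s_p_def by simp
qed

lemma norm_zeta [simp]: "norm (zeta p) = 1"
  unfolding zeta_def by (simp add: norm_exp_eq_Re)

lemma zeta_power_eq_1_iff:
  assumes "p > 0"
  shows "zeta p ^ n = 1 \<longleftrightarrow> p dvd n"
proof -
  have "zeta p ^ n = exp (2 * of_real pi * \<i> * of_nat n / of_nat p)"
    unfolding zeta_def exp_of_nat_mult[symmetric] by (simp add: mult_ac)
  also have "\<dots> = 1 \<longleftrightarrow> p dvd n"
    by (rule complex_root_unity_eq_1) (use assms in simp)
  finally show ?thesis .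
qed

lemma zeta_power_self [simp]: "zeta p ^ p = 1"
  by (cases "p = 0") (simp_all add: zeta_power_eq_1_iff)

lemma zeta_power_power_self [simp]: "(zeta p ^ n) ^ p = 1"
  by (metis power_mult mult.commute power_one zeta_power_self)

lemma sum_zeta_power:
  assumes "p > 0"
  shows "(\<Sum>r<p. (zeta p ^ n) ^ r) = (if p dvd n then of_nat p else 0)"
proof (cases "p dvd n")
  case False
  then show ?thesis
    using geometric_sum[of "zeta p ^ n" p] zeta_power_eq_1_iff[OF assms] by simp
next
  case True
  then have "zeta p ^ n = 1"
    using zeta_power_eq_1_iff[OF assms] by blast
  with True show ?thesis
    by simp
qed

lemma Uop_weight_eq_zeta_power:
  assumes "p > 0" and "m \<le> p"
  shows "exp (- 2 * pi * \<i> * of_nat r * of_nat m / of_nat p) = zeta p ^ (r * (p - m))"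
proof -
  have "zeta p ^ (r * (p - m)) = exp (of_nat (r * (p - m)) * (2 * pi * \<i> / of_nat p))"
    unfolding zeta_def by (rule exp_of_nat_mult[symmetric])
  also have "of_nat (r * (p - m)) * (2 * pi * \<i> / of_nat p) =
        of_nat r * (2 * pi * \<i>) + (- 2 * pi * \<i> * of_nat r * of_nat m / of_nat p)"
    using assms by (simp add: of_nat_diff field_simps)
  also have "exp \<dots> = exp (- 2 * pi * \<i> * of_nat r * of_nat m / of_nat p)"
    by (simp only: exp_add exp_of_nat_mult of_real_mult of_real_numeral exp_two_pi_i power_one mult_1_left)
  finally show ?thesis ..
qed

lemma dvd_add_diff_iff_mod_eq:
  fixes n m p :: nat
  assumes "m < p"
  shows "p dvd n + (p - m) \<longleftrightarrow> n mod p = m"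
proof -
  have "p dvd n + (p - m) \<longleftrightarrow> p dvd (n + p) - m"
    using assms by (simp add: add_diff_assoc)
  also have "\<dots> \<longleftrightarrow> (n + p) mod p = m mod p"
    using assms by (intro mod_eq_dvd_iff_nat[symmetric]) simp
  finally show ?thesis
    using assms by simp
qed

lemma qpow_nonzero [simp]: "qpow a z \<noteq> 0"
  unfolding qpow_def by simp

lemma qpow_add: "qpow a z * qpow b z = qpow (a + b) z"
  unfolding qpow_def by (simp add: exp_add[symmetric] distrib_left distrib_right)

lemma qpow_of_nat: "qpow (of_nat n) z = qq z ^ n"
  unfolding qpow_def qq_def exp_of_nat_mult[symmetric] by (simp add: mult_ac)

lemma qpow_of_nat_divide: "qpow (of_nat n / of_nat p) z = qq (z / of_nat p) ^ n"
  unfolding qpow_of_nat[symmetric] qpow_def by simp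

lemma qpow_scale: "qpow a (of_nat N * z) = qpow (of_nat N * a) z"
  unfolding qpow_def by (simp add: mult_ac)

lemma qq_scale: "qq (of_nat N * z) = qq z ^ N"
  using qpow_of_nat[of N z] qpow_scale[of 1 N z] by (simp add: qpow_def qq_def)

lemma norm_qq_less_1:
  assumes "Im z > 0"
  shows "norm (qq z) < 1"
  using assms unfolding qq_def by (simp add: norm_exp_eq_Re)

lemma qq_div_power:
  assumes "p > 0"
  shows "qq (z / of_nat p) ^ p = qq z"
  using qq_scale[of p "z / of_nat p"] assms by simp

lemma qq_translate:
  assumes "p > 0"
  shows "qq ((z + of_nat r) / of_nat p) = qq (z / of_nat p) * zeta p ^ r"
proof -
  have "2 * pi * \<i> * ((z + of_nat r) / of_nat p) =
        2 * pi * \<i> * (z / of_nat p) + of_nat r * (2 * pi * \<i> / of_nat p)"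
    using assms by (simp add: field_simps)
  then show ?thesis
    unfolding qq_def zeta_def exp_of_nat_mult[symmetric] by (simp add: exp_add)
qed

lemma convergent_prod_qpoch:
  fixes a q :: complex
  assumes "norm q < 1"
  shows "convergent_prod (\<lambda>k. 1 - a * q ^ k)"
proof -
  have "summable (\<lambda>k. norm a * norm q ^ k)"
    using assms by (intro summable_mult summable_geometric) simp
  then have "summable (\<lambda>k. norm ((1 - a * q ^ k) - 1))"
    by (simp add: norm_mult norm_power)
  then show ?thesis
    by (intro abs_convergent_prod_imp_convergent_prod summable_imp_abs_convergent_prod)
qed

lemma qpoch_nonzero:
  fixes a q :: complex
  assumes "norm a < 1" and "norm q < 1"
  shows "qpoch a q \<noteq> 0"
  unfolding qpoch_def
proof (rule prodinf_nonzero[OF convergent_prod_qpoch[OF assms(2)]])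
  fix k
  have "norm (a * q ^ k) = norm a * norm q ^ k"
    by (simp add: norm_mult norm_power)
  also have "\<dots> \<le> norm a"
    using assms by (intro mult_left_le power_le_one) auto
  finally have "norm (a * q ^ k) < 1"
    using assms(1) by linarith
  then show "1 - a * q ^ k \<noteq> 0"
    by auto
qed

lemma qpoch_unfold:
  fixes a q :: complex
  assumes "norm q < 1" and "a \<noteq> 1"
  shows "qpoch a q = (1 - a) * qpoch (a * q) q"
proof -
  have "qpoch (a * q) q = qpoch a q / (1 - a)"
    using prodinf_split_head[OF convergent_prod_qpoch[OF assms(1), of a]] assms(2)
    unfolding qpoch_def by (simp add: mult.assoc)
  then show ?thesis
    using assms(2) by simp
qed

lemma holomorphic_on_prodinf:
  fixes f :: "nat \<Rightarrow> complex \<Rightarrow> complex"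
  assumes "open S" and holo: "\<And>n. f n holomorphic_on S"
    and local_bound: "\<And>x. x \<in> S \<Longrightarrow> \<exists>d>0. cball x d \<subseteq> S \<and>
          (\<exists>M. summable M \<and> (\<forall>n. \<forall>y\<in>cball x d. norm (f n y - 1) \<le> M n))"
  shows "(\<lambda>x. \<Prod>n. f n x) holomorphic_on S"
proof (rule holomorphic_uniform_sequence[where f = "\<lambda>N x. \<Prod>n<N. f n x", OF \<open>open S\<close>])
  show "(\<lambda>x. \<Prod>n<N. f n x) holomorphic_on S" for N
    using holo by (intro holomorphic_on_prod) auto
  fix x assume "x \<in> S"
  from local_bound[OF this] obtain d M where d: "d > 0" "cball x d \<subseteq> S" and "summable M"
    and M: "\<And>n y. y \<in> cball x d \<Longrightarrow> norm (f n y - 1) \<le> M n"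
    by auto
  have "uniformly_convergent_on (cball x d) (\<lambda>N y. \<Prod>n<N. f n y)"
  proof (rule uniformly_convergent_on_prod')
    show "continuous_on (cball x d) (f n)" for n
      using holomorphic_on_imp_continuous_on[OF holo] d(2) by (rule continuous_on_subset)
    show "uniformly_convergent_on (cball x d) (\<lambda>N y. \<Sum>n<N. norm (f n y - 1))"
      using M \<open>summable M\<close> by (intro Weierstrass_m_test'[where M = M]) auto
  qed (rule compact_cball)
  then obtain g where g: "uniform_limit (cball x d) (\<lambda>N y. \<Prod>n<N. f n y) g sequentially"
    unfolding uniformly_convergent_on_def by blast
  have g_eq: "g y = (\<Prod>n. f n y)" if y: "y \<in> cball x d" for y
  proof -
    have "summable (\<lambda>n. norm (f n y - 1))"
      using M[OF y] by (intro summable_comparison_test'[OF \<open>summable M\<close>, of 0]) auto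
    then have "convergent_prod (\<lambda>n. f n y)"
      by (intro abs_convergent_prod_imp_convergent_prod summable_imp_abs_convergent_prod)
    then have "(\<lambda>N. \<Prod>n<N. f n y) \<longlonglongrightarrow> (\<Prod>n. f n y)"
      by (intro has_prod_imp_tendsto' convergent_prod_has_prod)
    moreover have "(\<lambda>N. \<Prod>n<N. f n y) \<longlonglongrightarrow> g y"
      using g y by (rule tendsto_uniform_limitI)
    ultimately show ?thesis
      by (rule LIMSEQ_unique[rotated])
  qed
  have "uniform_limit (cball x d) (\<lambda>N y. \<Prod>n<N. f n y) g sequentially \<longleftrightarrow>
        uniform_limit (cball x d) (\<lambda>N y. \<Prod>n<N. f n y) (\<lambda>y. \<Prod>n. f n y) sequentially"
    by (rule uniform_limit_cong') (simp_all add: g_eq)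
  with g have "uniform_limit (cball x d) (\<lambda>N y. \<Prod>n<N. f n y) (\<lambda>y. \<Prod>n. f n y) sequentially"
    by blast
  with d show "\<exists>d>0. cball x d \<subseteq> S \<and>
      uniform_limit (cball x d) (\<lambda>N y. \<Prod>n<N. f n y) (\<lambda>y. \<Prod>n. f n y) sequentially"
    by blast
qed

lemma qpoch_holomorphic: "(\<lambda>q. qpoch (c * q) q) holomorphic_on ball 0 1"
  unfolding qpoch_def
proof (rule holomorphic_on_prodinf)
  show "(\<lambda>q. 1 - c * q * q ^ k) holomorphic_on ball 0 1" for k
    by (intro holomorphic_intros)
  fix x :: complex
  assume "x \<in> ball 0 1"
  define R where "R = (1 + norm x) / 2"
  define d where "d = (1 - norm x) / 2"
  have "R < 1" "d > 0"
    using \<open>x \<in> ball 0 1\<close> by (simp_all add: R_def d_def)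
  have norm_le_R: "norm y \<le> R" if "y \<in> cball x d" for y
    using that norm_triangle_sub[of y x] by (simp add: R_def d_def dist_norm norm_minus_commute)
  have "cball x d \<subseteq> ball 0 1"
    using norm_le_R \<open>R < 1\<close> by fastforce
  moreover have "norm ((1 - c * y * y ^ k) - 1) \<le> norm c * R ^ Suc k" if "y \<in> cball x d" for y k
  proof -
    have "norm ((1 - c * y * y ^ k) - 1) = norm c * norm y ^ Suc k"
      by (simp add: norm_mult norm_power mult.assoc)
    also have "\<dots> \<le> norm c * R ^ Suc k"
      using norm_le_R[OF that] by (intro mult_left_mono power_mono) auto
    finally show ?thesis .
  qed
  moreover have "summable (\<lambda>k. norm c * R ^ Suc k)"
    using \<open>R < 1\<close> \<open>d > 0\<close> by (intro summable_mult summable_geometric) (simp_all add: R_def)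
  ultimately show "\<exists>d>0. cball x d \<subseteq> ball 0 1 \<and> (\<exists>M. summable M \<and>
      (\<forall>k. \<forall>y\<in>cball x d. norm ((1 - c * y * y ^ k) - 1) \<le> M k))"
    using \<open>d > 0\<close> by blast
qed simp

lemma prod_eq_qpoch_power: "(\<Prod>n. 1 - q ^ (p * (n + 1))) = qpoch (q ^ p) (q ^ p)"
  unfolding qpoch_def by (simp add: power_add mult.commute flip: power_mult)

lemma eta_eq_qpoch: "eta w = qpow (1/24) w * qpoch (qq w) (qq w)"
  unfolding eta_def qpoch_def by simp

lemma E0_eq_qpoch:
  assumes "norm (qq w) < 1"
  shows "E0 p l w = qpow (1/12) w * qpoch (zeta p ^ l) (qq w) * qpoch (inverse (zeta p ^ l) * qq w) (qq w)"
proof -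
  have "(\<lambda>m. 1 - inverse (zeta p ^ l) * qq w ^ (m + 1)) = (\<lambda>m. 1 - inverse (zeta p ^ l) * qq w * qq w ^ m)"
    by (simp add: mult.assoc)
  then show ?thesis
    unfolding E0_def qpoch_def
    using prodinf_mult[OF convergent_prod_qpoch[OF assms, of "zeta p ^ l"]
        convergent_prod_qpoch[OF assms, of "inverse (zeta p ^ l) * qq w"]]
    by (simp add: mult.assoc)
qed

lemma eta_quotient_F1_eq_crank_gf:
  fixes N s :: nat
  assumes N: "N = 24 * s + 1" and "Im w > 0" and "p > 0" and "\<not> p dvd l"
  shows "(1 - zeta p ^ l) * (eta (of_nat N * w) / eta w * F1 p l w) =
    qq w ^ s * qpoch (qq w ^ N) (qq w ^ N) * crank_gf (zeta p ^ l) (qq w)"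
proof -
  define x where "x = qq w"
  define \<zeta> where "\<zeta> = zeta p ^ l"
  have x: "norm x < 1"
    unfolding x_def using \<open>Im w > 0\<close> by (rule norm_qq_less_1)
  have "norm \<zeta> = 1"
    by (simp add: \<zeta>_def norm_power)
  have "\<zeta> \<noteq> 1"
    unfolding \<zeta>_def using zeta_power_eq_1_iff[OF \<open>p > 0\<close>] \<open>\<not> p dvd l\<close> by blast
  have nonzero: "qpoch x x \<noteq> 0" "qpoch (\<zeta> * x) x \<noteq> 0" "qpoch (inverse \<zeta> * x) x \<noteq> 0"
    using x \<open>norm \<zeta> = 1\<close> by (simp_all add: qpoch_nonzero norm_mult norm_inverse)
  have "real N / 24 + 1 / 24 = 1 / 12 + real s"
    using N by (simp add: field_simps)
  then have qpow_exponents: "qpow (of_nat N / 24) w * qpow (1/24) w = qpow (1/12) w * x ^ s"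
    unfolding qpow_add x_def qpow_of_nat[symmetric] by simp
  have eta_Nw: "eta (of_nat N * w) = qpow (of_nat N / 24) w * qpoch (x ^ N) (x ^ N)"
    unfolding eta_eq_qpoch qpow_scale qq_scale x_def by simp
  have eta_w: "eta w = qpow (1/24) w * qpoch x x"
    unfolding eta_eq_qpoch x_def ..
  have "E0 p l w = qpow (1/12) w * qpoch \<zeta> x * qpoch (inverse \<zeta> * x) x"
    using E0_eq_qpoch x unfolding x_def \<zeta>_def by blast
  also have "qpoch \<zeta> x = (1 - \<zeta>) * qpoch (\<zeta> * x) x"
    using x \<open>\<zeta> \<noteq> 1\<close> by (rule qpoch_unfold)
  finally have E0: "E0 p l w = qpow (1/12) w * ((1 - \<zeta>) * qpoch (\<zeta> * x) x) * qpoch (inverse \<zeta> * x) x" .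
  have "(1 - \<zeta>) * (eta (of_nat N * w) / eta w * F1 p l w) =
      (1 - \<zeta>) * (qpow (of_nat N / 24) w * qpoch (x ^ N) (x ^ N) / (qpow (1/24) w * qpoch x x) *
        ((qpow (1/24) w * qpoch x x) ^ 2 /
          (qpow (1/12) w * ((1 - \<zeta>) * qpoch (\<zeta> * x) x) * qpoch (inverse \<zeta> * x) x)))"
    unfolding F1_def eta_Nw eta_w E0 \<zeta>_def ..
  also have "\<dots> = qpow (of_nat N / 24) w * qpow (1/24) w / qpow (1/12) w * qpoch (x ^ N) (x ^ N) *
      (qpoch x x / (qpoch (\<zeta> * x) x * qpoch (inverse \<zeta> * x) x))"
    using nonzero \<open>\<zeta> \<noteq> 1\<close> by (simp add: field_simps power2_eq_square)
  also have "\<dots> = x ^ s * qpoch (x ^ N) (x ^ N) * crank_gf \<zeta> x"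
    unfolding qpow_exponents crank_gf_def by simp
  finally show ?thesis
    unfolding x_def \<zeta>_def .
qed

lemma holomorphic_power_series_abs_summable:
  fixes f :: "complex \<Rightarrow> complex"
  assumes "f holomorphic_on ball z r" and "w \<in> ball z r"
  shows "summable (\<lambda>n. norm ((deriv ^^ n) f z / fact n * (w - z) ^ n))"
proof -
  define \<rho> where "\<rho> = (dist z w + r) / 2"
  have "dist z w < \<rho>" "\<rho> < r"
    using assms(2) by (auto simp: \<rho>_def)
  moreover from this have "\<rho> \<ge> 0"
    using zero_le_dist[of z w] by linarith
  ultimately have "z + of_real \<rho> \<in> ball z r"
    by (simp add: dist_norm)
  from holomorphic_power_series[OF assms(1) this]
  have "summable (\<lambda>n. (deriv ^^ n) f z / fact n * of_real \<rho> ^ n)"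
    by (simp add: sums_summable)
  then have "ereal \<rho> \<le> conv_radius (\<lambda>n. (deriv ^^ n) f z / fact n)"
    using conv_radius_geI \<open>\<rho> \<ge> 0\<close> by fastforce
  moreover have "ereal (norm (w - z)) < ereal \<rho>"
    using \<open>dist z w < \<rho>\<close> by (simp add: dist_norm norm_minus_commute)
  ultimately show ?thesis
    by (intro abs_summable_in_conv_radius) (rule order.strict_trans2)
qed

lemma crank_gf_holomorphic:
  assumes "norm x = 1"
  shows "crank_gf x holomorphic_on ball 0 1"
proof -
  have "qpoch (x * q) q * qpoch (inverse x * q) q \<noteq> 0" if "q \<in> ball 0 1" for q
    using that assms by (simp add: qpoch_nonzero norm_mult norm_inverse)
  moreover have "(\<lambda>q. qpoch q q) holomorphic_on ball 0 1"
    using qpoch_holomorphic[of 1] by simp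
  ultimately have "(\<lambda>q. qpoch q q / (qpoch (x * q) q * qpoch (inverse x * q) q))
      holomorphic_on ball 0 1"
    by (intro holomorphic_intros qpoch_holomorphic) auto
  then show ?thesis
    unfolding crank_gf_def[abs_def] by simp
qed

lemma crank_coeff_of_nat:
  "crank_coeff p l (int n) = (deriv ^^ n) (crank_gf (zeta p ^ l)) 0 / fact n"
  unfolding crank_coeff_def by simp

lemma crank_series_sums:
  assumes "norm w < 1"
  shows "(\<lambda>n. crank_coeff p l (int n) * w ^ n) sums crank_gf (zeta p ^ l) w"
  using holomorphic_power_series[OF crank_gf_holomorphic, of "zeta p ^ l" w] assms
  by (simp add: crank_coeff_of_nat norm_power)

lemma crank_series_abs_summable:
  assumes "norm w < 1"
  shows "summable (\<lambda>n. norm (crank_coeff p l (int n) * w ^ n))"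
  using holomorphic_power_series_abs_summable[OF crank_gf_holomorphic[of "zeta p ^ l"], of w] assms
  by (simp add: crank_coeff_of_nat norm_power)

lemma shifted_crank_series_sums:
  assumes "norm w < 1"
  shows "(\<lambda>n. crank_coeff p l (int n - int s) * w ^ n) sums (w ^ s * crank_gf (zeta p ^ l) w)"
proof -
  have "(\<lambda>n. crank_coeff p l (int (n + s) - int s) * w ^ (n + s)) =
      (\<lambda>n. w ^ s * (crank_coeff p l (int n) * w ^ n))"
    by (simp add: power_add mult_ac)
  then have "(\<lambda>n. crank_coeff p l (int (n + s) - int s) * w ^ (n + s)) sums (w ^ s * crank_gf (zeta p ^ l) w)"
    using sums_mult[OF crank_series_sums[OF assms]] by simp
  then show ?thesis
    by (subst (asm) sums_zero_iff_shift) (simp_all add: crank_coeff_def)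
qed

lemma filtered_shifted_crank_series_abs_summable:
  assumes "norm w < 1"
  shows "summable (\<lambda>n. norm (if Q n then C * crank_coeff p l (int n - int s) * w ^ n else 0))"
proof -
  have "summable (\<lambda>n. norm (w ^ s) * norm (crank_coeff p l (int n) * w ^ n))"
    using crank_series_abs_summable[OF assms] by (rule summable_mult)
  then have "summable (\<lambda>n. norm (crank_coeff p l (int (n + s) - int s) * w ^ (n + s)))"
    by (simp add: power_add norm_mult mult_ac)
  then have "summable (\<lambda>n. norm (crank_coeff p l (int n - int s) * w ^ n))"
    by (subst (asm) summable_iff_shift[where f = "\<lambda>n. norm (crank_coeff p l (int n - int s) * w ^ n)"])
  then have "summable (\<lambda>n. norm C * norm (crank_coeff p l (int n - int s) * w ^ n))"
    by (rule summable_mult)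
  then show ?thesis
    by (rule summable_comparison_test'[where N = 0]) (simp add: norm_mult mult.assoc)
qed

lemma Uop_cmult: "Uop p m (\<lambda>w. c * F w) z = c * Uop p m F z"
  unfolding Uop_def by (simp add: sum_distrib_left mult_ac)

lemma Uop_power_series:
  fixes a :: "nat \<Rightarrow> complex" and F :: "complex \<Rightarrow> complex"
  assumes "p > 0" and "m < p"
    and series: "\<And>r. r < p \<Longrightarrow>
      (\<lambda>n. a n * (qq (z / of_nat p) * zeta p ^ r) ^ n) sums F ((z + of_nat r) / of_nat p)"
  shows "(\<lambda>n. if n mod p = m then a n * qq (z / of_nat p) ^ n else 0) sums Uop p m F z"
proof -
  define t where "t = qq (z / of_nat p)"
  define \<omega> where "\<omega> = zeta p"
  have filter: "1 / of_nat p * (\<Sum>r<p. \<omega> ^ (r * (p - m)) * (a n * (t * \<omega> ^ r) ^ n)) =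
      (if n mod p = m then a n * t ^ n else 0)" for n
  proof -
    have summand: "\<omega> ^ (r * (p - m)) * (a n * (t * \<omega> ^ r) ^ n) = a n * t ^ n * (\<omega> ^ (n + (p - m))) ^ r" for r
      by (simp add: power_mult_distrib power_add mult_ac flip: power_mult)
    have "(\<Sum>r<p. \<omega> ^ (r * (p - m)) * (a n * (t * \<omega> ^ r) ^ n)) =
        a n * t ^ n * (\<Sum>r<p. (\<omega> ^ (n + (p - m))) ^ r)"
      unfolding summand sum_distrib_left ..
    also have "\<dots> = a n * t ^ n * (if p dvd n + (p - m) then of_nat p else 0)"
      unfolding \<omega>_def sum_zeta_power[OF \<open>p > 0\<close>] ..
    finally show ?thesis
      using \<open>p > 0\<close> dvd_add_diff_iff_mod_eq[OF \<open>m < p\<close>] by simp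
  qed
  have "(\<lambda>n. 1 / of_nat p * (\<Sum>r<p. \<omega> ^ (r * (p - m)) * (a n * (t * \<omega> ^ r) ^ n))) sums
      (1 / of_nat p * (\<Sum>r<p. \<omega> ^ (r * (p - m)) * F ((z + of_nat r) / of_nat p)))"
    using series unfolding t_def[symmetric] \<omega>_def[symmetric] by (intro sums_mult sums_sum) simp
  also have "1 / of_nat p * (\<Sum>r<p. \<omega> ^ (r * (p - m)) * F ((z + of_nat r) / of_nat p)) = Uop p m F z"
    unfolding Uop_def \<omega>_def using Uop_weight_eq_zeta_power[OF \<open>p > 0\<close>] \<open>m < p\<close> by simp
  finally have "(\<lambda>n. if n mod p = m then a n * t ^ n else 0) sums Uop p m F z"
    by (simp only: filter)
  then show ?thesis
    by (simp only: t_def)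
qed

lemma eta_quotient_F1_translate_sums:
  fixes p l s r :: nat
  assumes "p > 0" and "\<not> p dvd l" and "p ^ 2 = 24 * s + 1" and "Im z > 0"
  defines "w \<equiv> (z + of_nat r) / of_nat p"
  shows "(\<lambda>n. qpoch (qq z ^ p) (qq z ^ p) * crank_coeff p l (int n - int s) *
      (qq (z / of_nat p) * zeta p ^ r) ^ n) sums
    ((1 - zeta p ^ l) * (eta (of_nat (p ^ 2) * w) / eta w * F1 p l w))"
proof -
  have "Im w > 0"
    using assms by (simp add: w_def)
  have qq_w: "qq w = qq (z / of_nat p) * zeta p ^ r"
    unfolding w_def using \<open>p > 0\<close> by (rule qq_translate)
  have "qq w ^ p = qq z"
    unfolding qq_w power_mult_distrib qq_div_power[OF \<open>p > 0\<close>] by simp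
  then have "qq w ^ (p ^ 2) = qq z ^ p"
    by (simp add: power2_eq_square power_mult)
  then have "(1 - zeta p ^ l) * (eta (of_nat (p ^ 2) * w) / eta w * F1 p l w) =
      qpoch (qq z ^ p) (qq z ^ p) * (qq w ^ s * crank_gf (zeta p ^ l) (qq w))"
    using eta_quotient_F1_eq_crank_gf[OF \<open>p ^ 2 = 24 * s + 1\<close> \<open>Im w > 0\<close> \<open>p > 0\<close> \<open>\<not> p dvd l\<close>] by simp
  moreover have "(\<lambda>n. crank_coeff p l (int n - int s) * qq w ^ n) sums (qq w ^ s * crank_gf (zeta p ^ l) (qq w))"
    using \<open>Im w > 0\<close> by (intro shifted_crank_series_sums norm_qq_less_1)
  ultimately show ?thesis
    unfolding qq_w by (auto dest: sums_mult[where c = "qpoch (qq z ^ p) (qq z ^ p)"] simp: mult.assoc)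
qed

lemma has_sum_residue_class:
  fixes f :: "int \<Rightarrow> 'a::{comm_monoid_add,topological_space}" and p m :: int
  assumes "p > 0" and "0 \<le> m" and "m < p"
  shows "((\<lambda>k. f (p * k + m)) has_sum S) UNIV \<longleftrightarrow> (f has_sum S) {n. n mod p = m}"
proof (rule has_sum_reindex_bij_betw)
  show "bij_betw (\<lambda>k. p * k + m) UNIV {n. n mod p = m}"
  proof (rule bij_betw_byWitness[where f' = "\<lambda>n. n div p"])
    show "\<forall>n\<in>{n. n mod p = m}. p * (n div p) + m = n"
      by (metis mem_Collect_eq mult_div_mod_eq)
  qed (use assms in auto)
qed

lemma KC_eq_filtered_series:
  fixes p m s :: nat and S :: complex
  assumes "p > 0" and "m < p" and "s_p p = int s"
    and S: "((\<lambda>n. if n mod p = m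
        then qpoch (qq z ^ p) (qq z ^ p) * crank_coeff p l (int n - int s) * qq (z / of_nat p) ^ n
        else 0) has_sum S) UNIV"
  shows "KC p m l z = S"
proof -
  define P where "P = qpoch (qq z ^ p) (qq z ^ p)"
  define f where "f n = P * crank_coeff p l (n - int s) * qpow (of_int n / of_nat p) z" for n :: int
  have "((\<lambda>n. f (int n)) has_sum S) {n. n mod p = m}"
    using S by (subst (asm) has_sum_cong_neutral) (auto simp: f_def P_def qpow_of_nat_divide)
  then have "(f has_sum S) (int ` {n. n mod p = m})"
    by (simp add: has_sum_reindex o_def)
  moreover have negative: "n < 0" if "n mod int p = int m" and "n \<notin> int ` {n. n mod p = m}" for n
  proof (rule ccontr)
    assume "\<not> n < 0"
    then have "int (nat n mod p) = int m"
      using that(1) by (simp add: of_nat_mod)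
    then have "n = int (nat n)" and "nat n mod p = m"
      using \<open>\<not> n < 0\<close> by simp_all
    with that(2) show False
      by blast
  qed
  then have "f n = 0" if "n mod int p = int m" and "n \<notin> int ` {n. n mod p = m}" for n
    using negative[OF that] by (simp add: f_def crank_coeff_def)
  ultimately have "(f has_sum S) {n. n mod int p = int m}"
    by (subst (asm) has_sum_cong_neutral) (auto simp: zmod_int)
  then have "((\<lambda>k. f (int p * k + int m)) has_sum S) UNIV"
    using \<open>p > 0\<close> \<open>m < p\<close> by (subst has_sum_residue_class) simp_all
  moreover have "f (int p * k + int m) = qpow (of_nat m / of_nat p) z * P *
      (crank_coeff p l (int p * k + int m - s_p p) * qpow (of_int k) z)" for k
    using \<open>p > 0\<close> \<open>s_p p = int s\<close> by (simp add: f_def qpow_add add_divide_distrib add.commute mult_ac)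
  ultimately have "infsum (\<lambda>k. qpow (of_nat m / of_nat p) z * P *
      (crank_coeff p l (int p * k + int m - s_p p) * qpow (of_int k) z)) UNIV = S"
    by (simp add: infsumI)
  then show ?thesis
    unfolding KC_def prod_eq_qpoch_power P_def infsum_cmult_right' .
qed

theorem proposition2p5:
  fixes p m l :: nat and z :: complex
  assumes "prime p" and "p > 3"
    and "m \<le> p - 1" and "1 \<le> l" and "l \<le> p - 1"
    and "Im z > 0"
  shows "KC p m l z =
    (1 - zeta p ^ l) *
      Uop p m (\<lambda>w. eta (of_nat (p ^ 2) * w) / eta w * F1 p l w) z"
proof -
  have "p > 0" "m < p" "\<not> p dvd l"
    using assms(2-5) by (auto dest: dvd_imp_le)
  obtain s where "p ^ 2 = 24 * s + 1" and "s_p p = int s"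
    using s_p_exact[OF assms(1,2)] .
  define g where "g n = (if n mod p = m
      then qpoch (qq z ^ p) (qq z ^ p) * crank_coeff p l (int n - int s) * qq (z / of_nat p) ^ n
      else 0)" for n
  have "g sums ((1 - zeta p ^ l) * Uop p m (\<lambda>w. eta (of_nat (p ^ 2) * w) / eta w * F1 p l w) z)"
    unfolding g_def Uop_cmult[symmetric]
    by (rule Uop_power_series[OF \<open>p > 0\<close> \<open>m < p\<close> eta_quotient_F1_translate_sums[OF
        \<open>p > 0\<close> \<open>\<not> p dvd l\<close> \<open>p ^ 2 = 24 * s + 1\<close> assms(6)]])
  moreover have "summable (\<lambda>n. norm (g n))"
    unfolding g_def using \<open>p > 0\<close> assms(6)
    by (intro filtered_shifted_crank_series_abs_summable norm_qq_less_1) simp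
  ultimately have "(g has_sum ((1 - zeta p ^ l) *
      Uop p m (\<lambda>w. eta (of_nat (p ^ 2) * w) / eta w * F1 p l w) z)) UNIV"
    by (intro norm_summable_imp_has_sum)
  then show ?thesis
    unfolding g_def by (rule KC_eq_filtered_series[OF \<open>p > 0\<close> \<open>m < p\<close> \<open>s_p p = int s\<close>])
qed

end
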